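(* Let $f:\mathbb{R}\to(0,\infty)$ be $C^4$, unimodal with maximum at $0$, of the form $f=e^{-H}$ with $H$ regularly varying (there is $\alpha>0$ with $H(tx)/H(t)\to x^\alpha$ as $|t|\to\infty$ for all $x>0$), and with $|(\log f)''''|<M$ for some $M>0$. Suppose there exists $\gamma>0$ such that $|\mathrm{Var}_{g_\beta}(Y^2)-2|=\mathcal{O}(\beta^{-\gamma})$ as $\beta\to\infty$, where $g_\beta(y)\propto f^\beta\big(y/\sqrt{-\beta h''(0)}\big)$ is a probability density. Then, as $\beta\to\infty$, $$\frac{1}{4\beta}R(\beta)=\mathcal{O}(\beta^{-k}),$$ where in general $k=5/2$, but if $h'''(0)=0$ then $k=3$.
   Context: $h=\log f$, $k(x)=xh'(x)$, $r(x)=x^2h''(x)$; $\mathbb{E}_\beta$ denotes expectation under $f^\beta/\int f^\beta$; $R(\beta)=\mathbb{E}_\beta[r(X)-k(X)]$. *)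

theory Defs
  imports "HOL-Analysis.Analysis" "HOL-Library.Landau_Symbols"
begin

definition C4 :: "(real \<Rightarrow> real) \<Rightarrow> bool" where
  "C4 f \<longleftrightarrow> (\<forall>n<4. \<forall>x. (deriv ^^ n) f differentiable (at x))
              \<and> continuous_on UNIV ((deriv ^^ 4) f)"

definition unimodal_at0 :: "(real \<Rightarrow> real) \<Rightarrow> bool" where
  "unimodal_at0 f \<longleftrightarrow> mono_on {..0} f \<and> antimono_on {0..} f"

definition regularly_varying :: "(real \<Rightarrow> real) \<Rightarrow> bool" where
  "regularly_varying H \<longleftrightarrow>
     (\<exists>\<alpha>>0. \<forall>x>0. ((\<lambda>t. H (t * x) / H t) \<longlongrightarrow> x powr \<alpha>) at_infinity)"

definition Ebeta :: "(real \<Rightarrow> real) \<Rightarrow> real \<Rightarrow> (real \<Rightarrow> real) \<Rightarrow> real" where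
  "Ebeta f \<beta> \<phi> = (\<integral>x. \<phi> x * f x powr \<beta> \<partial>lborel) / (\<integral>x. f x powr \<beta> \<partial>lborel)"

text \<open>h = log f, k(x) = x h'(x), r(x) = x^2 h''(x), R(beta) = E_beta[r(X) - k(X)].\<close>
definition logf :: "(real \<Rightarrow> real) \<Rightarrow> real \<Rightarrow> real" where
  "logf f = (\<lambda>x. ln (f x))"

definition Rfun :: "(real \<Rightarrow> real) \<Rightarrow> real \<Rightarrow> real" where
  "Rfun f \<beta> = Ebeta f \<beta>
     (\<lambda>x. x\<^sup>2 * (deriv ^^ 2) (logf f) x - x * deriv (logf f) x)"

definition gbeta :: "(real \<Rightarrow> real) \<Rightarrow> real \<Rightarrow> real \<Rightarrow> real" where
  "gbeta f \<beta> = (let s = sqrt (- \<beta> * (deriv ^^ 2) (logf f) 0) in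
     (\<lambda>y. f (y / s) powr \<beta> / (\<integral>z. f (z / s) powr \<beta> \<partial>lborel)))"

definition dvar :: "(real \<Rightarrow> real) \<Rightarrow> (real \<Rightarrow> real) \<Rightarrow> real" where
  "dvar g \<phi> = (\<integral>y. (\<phi> y)\<^sup>2 * g y \<partial>lborel) - (\<integral>y. \<phi> y * g y \<partial>lborel)\<^sup>2"

end

(*
  Write h = log f and u = h - h 0.  Unimodality gives h' 0 = 0, so by Taylor's theorem u lies
  between -c x^2 and -(c/4) x^2 near 0, where c = -h'' 0 > 0, and below a negative constant
  away from 0.  Regular variation makes H = -h grow by a fixed amount whenever |x| doubles,
  hence exp (-b H) decays like |x|^-6 and the weights exp (beta u) have finite moments of order 4.
  Laplace's method then bounds the normalised absolute moments E_beta |X|^k by C_k beta^(-k/2)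
  for k <= 4.  Taylor's theorem once more gives
  |x^2 h'' x - x h' x| <= |h''' 0| / 2 * |x|^3 + M x^4, so R beta = O(beta^(-3/2)), and
  O(beta^-2) when h''' 0 = 0; dividing by 4 beta yields the exponents 5/2 and 3.
*)

theory Submission
  imports Defs "HOL-Probability.Distributions" "HOL-Probability.Sinc_Integral"
begin

section \<open>Derivatives of log f and Taylor expansion at a critical point\<close>

lemma C4_has_real_derivative:
  assumes "C4 f" "n < 4"
  shows "((deriv ^^ n) f has_real_derivative (deriv ^^ Suc n) f x) (at x)"
  using assms by (simp add: C4_def DERIV_deriv_iff_real_differentiable)

lemma deriv_eqI:
  assumes "\<And>x. (g has_real_derivative g' x) (at x)"
  shows "deriv g = g'"
  using assms DERIV_imp_deriv by blast

lemma C4_deriv_ratio_has_real_derivative: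
  fixes f :: "real \<Rightarrow> real"
  assumes pos: "\<And>x. f x > 0" and C4: "C4 f" and "n < 4"
  shows "((\<lambda>x. (deriv ^^ n) f x / f x) has_real_derivative
      (deriv ^^ Suc n) f x / f x - (deriv ^^ n) f x / f x * (deriv f x / f x)) (at x)"
  using C4_has_real_derivative[OF C4 \<open>n < 4\<close>, of x] C4_has_real_derivative[OF C4, of 0 x] pos[of x]
  by (auto intro!: derivative_eq_intros simp: field_simps power2_eq_square)

lemma logf_iterated_derivatives:
  fixes f :: "real \<Rightarrow> real"
  assumes pos: "\<And>x. f x > 0" and C4: "C4 f" and "m \<le> 3"
  shows "((deriv ^^ m) (logf f) has_real_derivative (deriv ^^ Suc m) (logf f) x) (at x)"
proof -
  (* The derivatives of log f up to order 3 are polynomials in the ratios q n = f^(n) / f. *)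
  define q where "q n x = (deriv ^^ n) f x / f x" for n x
  have q': "(q n has_real_derivative q (Suc n) x - q n x * q 1 x) (at x)" if "n < 4" for n x
    using C4_deriv_ratio_has_real_derivative[OF pos C4 that, of x] by (simp add: q_def[abs_def])
  have q_diff: "q n differentiable (at x)" if "n < 4" for n x
    using q'[OF that] real_differentiable_def by blast
  have h0: "(logf f has_real_derivative q 1 x) (at x)" for x
    unfolding logf_def q_def using pos[of x] C4_has_real_derivative[OF C4, of 0 x]
    by (auto intro!: derivative_eq_intros simp: field_simps)
  have h1: "deriv (logf f) = q 1"
    using h0 by (simp add: deriv_eqI)
  have h2: "(deriv ^^ 2) (logf f) = (\<lambda>x. q 2 x - q 1 x ^ 2)"
  proof -
    have "(deriv ^^ 2) (logf f) = deriv (q 1)"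
      using h1 by (simp add: numeral_2_eq_2)
    also have "\<dots> = (\<lambda>x. q 2 x - q 1 x ^ 2)"
      using q'[of 1] by (intro deriv_eqI) (simp add: power2_eq_square numeral_2_eq_2)
    finally show ?thesis .
  qed
  have h3: "(deriv ^^ 3) (logf f) = (\<lambda>x. q 3 x - 3 * q 1 x * q 2 x + 2 * q 1 x ^ 3)"
  proof -
    have "(deriv ^^ 3) (logf f) = deriv (\<lambda>x. q 2 x - q 1 x ^ 2)"
      using h2 by (simp add: numeral_3_eq_3 numeral_2_eq_2)
    also have "\<dots> = (\<lambda>x. q 3 x - 3 * q 1 x * q 2 x + 2 * q 1 x ^ 3)"
      using q'[of 1] q'[of 2]
      by (intro deriv_eqI)
        (auto intro!: derivative_eq_intros simp: algebra_simps power2_eq_square power3_eq_cube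
          numeral_3_eq_3 numeral_2_eq_2)
    finally show ?thesis .
  qed
  have "(deriv ^^ m) (logf f) differentiable (at x)"
  proof -
    consider "m = 0" | "m = 1" | "m = 2" | "m = 3" using \<open>m \<le> 3\<close> by linarith
    then show ?thesis
    proof cases
      case 1
      then show ?thesis using h0 real_differentiable_def by auto
    qed (auto simp: h1 h2 h3 intro!: derivative_intros q_diff)
  qed
  then show ?thesis by (simp add: DERIV_deriv_iff_real_differentiable)
qed

lemma maclaurin_at_critical_point:
  fixes D :: "nat \<Rightarrow> real \<Rightarrow> real"
  assumes D: "\<And>m x. m < 2 \<Longrightarrow> (D m has_real_derivative D (Suc m) x) (at x)"
    and crit: "D 1 0 = 0"
  obtains t where "\<bar>t\<bar> \<le> \<bar>x\<bar>" "D 0 x = D 0 0 + D 2 t / 2 * x\<^sup>2"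
proof -
  obtain t where "\<bar>t\<bar> \<le> \<bar>x\<bar>" "D 0 x = (\<Sum>m<2. D m 0 / fact m * x ^ m) + D 2 t / fact 2 * x ^ 2"
    using Maclaurin_bi_le[of D "D 0" 2 x] D by blast
  with crit show thesis
    by (intro that[of t]) (auto simp: numeral_2_eq_2)
qed

lemma quadratic_bounds_near_critical_point:
  fixes D :: "nat \<Rightarrow> real \<Rightarrow> real"
  assumes D: "\<And>m x. m < 3 \<Longrightarrow> (D m has_real_derivative D (Suc m) x) (at x)"
    and crit: "D 1 0 = 0" and max: "D 2 0 < 0"
  obtains \<delta> where "\<delta> > 0"
    "\<And>x. \<bar>x\<bar> \<le> \<delta> \<Longrightarrow> D 2 0 * x\<^sup>2 \<le> D 0 x - D 0 0 \<and> D 0 x - D 0 0 \<le> D 2 0 / 4 * x\<^sup>2"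
proof -
  have "isCont (D 2) 0"
    using D[of 2 0] DERIV_isCont by simp
  then have "(D 2 \<longlongrightarrow> D 2 0) (nhds 0)"
    by (simp add: isCont_def tendsto_at_iff_tendsto_nhds)
  then have "\<forall>\<^sub>F t in nhds 0. 2 * D 2 0 < D 2 t \<and> D 2 t < D 2 0 / 2"
    using max by (intro eventually_conj order_tendstoD) auto
  then obtain e where "e > 0" and e: "\<And>t. dist t 0 < e \<Longrightarrow> 2 * D 2 0 < D 2 t \<and> D 2 t < D 2 0 / 2"
    by (auto simp: eventually_nhds_metric)
  show thesis
  proof (rule that[of "e / 2"])
    show "e / 2 > 0" using \<open>e > 0\<close> by simp
    fix x :: real
    assume "\<bar>x\<bar> \<le> e / 2"
    have "(D m has_real_derivative D (Suc m) y) (at y)" if "m < 2" for m y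
      using D that by simp
    then obtain t where t: "\<bar>t\<bar> \<le> \<bar>x\<bar>" "D 0 x = D 0 0 + D 2 t / 2 * x\<^sup>2"
      using crit by (rule maclaurin_at_critical_point)
    have "2 * D 2 0 \<le> D 2 t" "D 2 t \<le> D 2 0 / 2"
      using e[of t] t(1) \<open>\<bar>x\<bar> \<le> e / 2\<close> \<open>e > 0\<close> by (auto simp: dist_real_def)
    then have "2 * D 2 0 * x\<^sup>2 \<le> D 2 t * x\<^sup>2" "D 2 t * x\<^sup>2 \<le> D 2 0 / 2 * x\<^sup>2"
      by (intro mult_right_mono; simp)+
    then show "D 2 0 * x\<^sup>2 \<le> D 0 x - D 0 0 \<and> D 0 x - D 0 0 \<le> D 2 0 / 4 * x\<^sup>2"
      unfolding t(2) by simp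
  qed
qed

lemma abs_r_minus_k_le:
  fixes D :: "nat \<Rightarrow> real \<Rightarrow> real"
  assumes D: "\<And>m x. m < 4 \<Longrightarrow> (D m has_real_derivative D (Suc m) x) (at x)"
    and crit: "D 1 0 = 0" and M: "\<And>x. \<bar>D 4 x\<bar> \<le> M"
  shows "\<bar>x\<^sup>2 * D 2 x - x * D 1 x\<bar> \<le> \<bar>D 3 0\<bar> / 2 * \<bar>x\<bar> ^ 3 + M * x ^ 4"
proof -
  have "\<exists>t. \<bar>t\<bar> \<le> \<bar>x\<bar> \<and> D 2 x = (\<Sum>m<2. D (m + 2) 0 / fact m * x ^ m) + D (2 + 2) t / fact 2 * x ^ 2"
    by (rule Maclaurin_bi_le[where diff = "\<lambda>m. D (m + 2)"]) (use D in \<open>auto simp: numeral_2_eq_2\<close>)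
  moreover have "(\<Sum>m<2. D (m + 2) 0 / fact m * x ^ m) = D 2 0 + D 3 0 * x"
    by (simp add: numeral_2_eq_2 numeral_3_eq_3)
  ultimately obtain t1 where t1: "D 2 x = D 2 0 + D 3 0 * x + D 4 t1 / 2 * x ^ 2"
    by auto
  have "\<exists>t. \<bar>t\<bar> \<le> \<bar>x\<bar> \<and> D 1 x = (\<Sum>m<3. D (m + 1) 0 / fact m * x ^ m) + D (3 + 1) t / fact 3 * x ^ 3"
    by (rule Maclaurin_bi_le[where diff = "\<lambda>m. D (m + 1)"]) (use D in auto)
  moreover have "(\<Sum>m<3. D (m + 1) 0 / fact m * x ^ m) = D 1 0 + D 2 0 * x + D 3 0 / 2 * x ^ 2"
    by (simp add: numeral_2_eq_2 numeral_3_eq_3)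
  ultimately obtain t2 where t2: "D 1 x = D 1 0 + D 2 0 * x + D 3 0 / 2 * x ^ 2 + D 4 t2 / 6 * x ^ 3"
    by (auto simp: fact_numeral)
  have "x\<^sup>2 * D 2 x - x * D 1 x = D 3 0 / 2 * x ^ 3 + (D 4 t1 / 2 - D 4 t2 / 6) * x ^ 4"
    using t1 t2 crit
    by (simp add: algebra_simps power2_eq_square power3_eq_cube power4_eq_xxxx)
  moreover have "\<bar>D 4 t1 / 2 - D 4 t2 / 6\<bar> \<le> M"
    using M[of t1] M[of t2] by linarith
  ultimately show ?thesis
    by (simp add: abs_mult power_abs abs_triangle_ineq[THEN order_trans] mult_right_mono)
qed

section \<open>Unimodality and regular variation\<close>

lemma unimodal_at0_mono:
  assumes "unimodal_at0 g" "0 \<le> s \<and> s \<le> t \<or> t \<le> s \<and> s \<le> 0"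
  shows "g t \<le> g s"
  using assms(2)
proof
  assume "0 \<le> s \<and> s \<le> t"
  then show ?thesis
    using assms(1) monotone_onD[of "{0..}" "(\<le>)" "(\<ge>)" g s t] by (simp add: unimodal_at0_def)
next
  assume "t \<le> s \<and> s \<le> 0"
  then show ?thesis
    using assms(1) mono_onD[of "{..0}" g t s] by (simp add: unimodal_at0_def)
qed

lemma unimodal_at0_le: "unimodal_at0 g \<Longrightarrow> g x \<le> g 0"
  by (erule unimodal_at0_mono) auto

lemma unimodal_at0_tail:
  assumes "unimodal_at0 g" "0 \<le> \<delta>" "g \<delta> \<le> y" "g (- \<delta>) \<le> y" "\<delta> \<le> \<bar>x\<bar>"
  shows "g x \<le> y"
proof (cases "x \<ge> 0")
  case True
  then have "g x \<le> g \<delta>"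
    using assms by (intro unimodal_at0_mono) auto
  with assms show ?thesis by simp
next
  case False
  then have "g x \<le> g (- \<delta>)"
    using assms by (intro unimodal_at0_mono) auto
  with assms show ?thesis by simp
qed

lemma unimodal_at0_logf:
  assumes "\<And>x. f x > 0" "unimodal_at0 f"
  shows "unimodal_at0 (logf f)"
  using assms by (auto simp: unimodal_at0_def logf_def monotone_on_def)

lemma abs_le_inverse_1_plus_square:
  fixes g :: "real \<Rightarrow> real"
  assumes "T \<ge> 1"
    and near: "\<And>x. \<bar>x\<bar> \<le> T \<Longrightarrow> \<bar>g x\<bar> \<le> K"
    and far: "\<And>x. T \<le> \<bar>x\<bar> \<Longrightarrow> \<bar>g x\<bar> \<le> K / x\<^sup>2"
  shows "\<bar>g x\<bar> \<le> (2 + 2 * T\<^sup>2) * K / (1 + x\<^sup>2)"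
proof -
  have "K \<ge> 0"
    using near[of 0] \<open>T \<ge> 1\<close> by simp
  have "\<bar>g x\<bar> * (1 + x\<^sup>2) \<le> (2 + 2 * T\<^sup>2) * K"
  proof (cases "\<bar>x\<bar> \<le> T")
    case True
    then have "1 + x\<^sup>2 \<le> 1 + T\<^sup>2"
      using power_mono[of "\<bar>x\<bar>" T 2] by simp
    then have "\<bar>g x\<bar> * (1 + x\<^sup>2) \<le> K * (1 + T\<^sup>2)"
      using near[OF True] by (intro mult_mono) auto
    also have "\<dots> \<le> K * (2 + 2 * T\<^sup>2)"
      using \<open>K \<ge> 0\<close> zero_le_power2[of T] by (intro mult_left_mono) auto
    finally show ?thesis
      by (simp only: mult.commute)
  next
    case False
    then have "1 \<le> x\<^sup>2"
      using \<open>T \<ge> 1\<close> one_le_power[of "\<bar>x\<bar>" 2] by simp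
    then have "x \<noteq> 0"
      by auto
    then have "\<bar>g x\<bar> * x\<^sup>2 \<le> K"
      using far[of x] False by (simp add: le_divide_eq)
    moreover have "\<bar>g x\<bar> \<le> \<bar>g x\<bar> * x\<^sup>2"
      using \<open>1 \<le> x\<^sup>2\<close> mult_left_mono[of 1 "x\<^sup>2" "\<bar>g x\<bar>"] by simp
    ultimately have "\<bar>g x\<bar> * (1 + x\<^sup>2) \<le> K * 2"
      by (simp add: algebra_simps)
    also have "\<dots> \<le> K * (2 + 2 * T\<^sup>2)"
      using \<open>K \<ge> 0\<close> by (intro mult_left_mono) auto
    finally show ?thesis
      by (simp only: mult.commute)
  qed
  then show ?thesis
    by (simp add: pos_le_divide_eq add_pos_nonneg)
qed

lemma integrable_inverse_square_decay:
  fixes g :: "real \<Rightarrow> real"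
  assumes [measurable]: "g \<in> borel_measurable borel" and "T \<ge> 1"
    and near: "\<And>x. \<bar>x\<bar> \<le> T \<Longrightarrow> \<bar>g x\<bar> \<le> K"
    and far: "\<And>x. T \<le> \<bar>x\<bar> \<Longrightarrow> \<bar>g x\<bar> \<le> K / x\<^sup>2"
  shows "integrable lborel g"
proof (rule Bochner_Integration.integrable_bound)
  have "integrable lborel (\<lambda>x::real. inverse (1 + x\<^sup>2))"
    using integrable_inverse_1_plus_square by (simp add: einterval_eq_UNIV set_integrable_def)
  then show "integrable lborel (\<lambda>x. (2 + 2 * T\<^sup>2) * K * inverse (1 + x\<^sup>2))"
    by simp
  show "AE x in lborel. norm (g x) \<le> norm ((2 + 2 * T\<^sup>2) * K * inverse (1 + x\<^sup>2))"
    using abs_le_inverse_1_plus_square[OF assms(2-4)] near[of 0] \<open>T \<ge> 1\<close>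
    by (intro AE_I2) (simp add: field_simps)
qed simp

lemma regularly_varying_doubling_ratio:
  fixes H :: "real \<Rightarrow> real"
  assumes "regularly_varying H"
  obtains q T where "q > 1" "T \<ge> 1" "\<And>t. T \<le> \<bar>t\<bar> \<Longrightarrow> q < H (2 * t) / H t"
proof -
  obtain \<alpha> where "\<alpha> > 0" and lim: "((\<lambda>t. H (t * 2) / H t) \<longlongrightarrow> 2 powr \<alpha>) at_infinity"
    using assms unfolding regularly_varying_def by force
  define q where "q = (1 + 2 powr \<alpha>) / 2"
  have "1 < 2 powr \<alpha>"
    using \<open>\<alpha> > 0\<close> by simp
  then have "1 < q" "q < 2 powr \<alpha>"
    by (auto simp: q_def)
  then have "\<forall>\<^sub>F t in at_infinity. q < H (t * 2) / H t"
    using lim by (intro order_tendstoD) auto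
  then obtain T0 where "\<And>t. T0 \<le> norm t \<Longrightarrow> q < H (t * 2) / H t"
    by (auto simp: eventually_at_infinity)
  with \<open>1 < q\<close> show thesis
    by (intro that[of q "max T0 1"]) (auto simp: mult.commute)
qed

lemma regularly_varying_doubling_gain:
  fixes H :: "real \<Rightarrow> real"
  assumes regvar: "regularly_varying H"
    and unimodal: "unimodal_at0 (\<lambda>x. - H x)"
  obtains T d where "T \<ge> 1" "d > 0" "\<And>t. T \<le> \<bar>t\<bar> \<Longrightarrow> 0 < H t \<and> H t + d \<le> H (2 * t)"
proof -
  obtain q T where "q > 1" "T \<ge> 1" and ratio: "\<And>t. T \<le> \<bar>t\<bar> \<Longrightarrow> q < H (2 * t) / H t"
    using regularly_varying_doubling_ratio[OF regvar] by blast
  have valley: "H s \<le> H t" if "0 \<le> s \<and> s \<le> t \<or> t \<le> s \<and> s \<le> 0" for s t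
    using unimodal_at0_mono[OF unimodal that] by simp
  have pos: "0 < H t" if "T \<le> \<bar>t\<bar>" for t
  proof (rule ccontr)
    assume "\<not> 0 < H t"
    moreover have "H t \<le> H (2 * t)"
      by (rule valley) linarith
    ultimately have "H (2 * t) / H t \<le> 1"
      by (cases "H t = 0") (auto simp: divide_le_eq)
    with ratio[OF that] \<open>1 < q\<close> show False
      by linarith
  qed
  define m where "m = min (H T) (H (- T))"
  have "m > 0"
    using pos[of T] pos[of "- T"] \<open>T \<ge> 1\<close> by (simp add: m_def)
  have m_le: "m \<le> H t" if "T \<le> \<bar>t\<bar>" for t
    using valley[of T t] valley[of "- T" t] that \<open>T \<ge> 1\<close>
    by (cases "t \<ge> 0") (auto simp: m_def abs_if)
  show thesis
  proof (rule that[of T "(q - 1) * m"])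
    show "T \<ge> 1" "(q - 1) * m > 0"
      using \<open>T \<ge> 1\<close> \<open>1 < q\<close> \<open>m > 0\<close> by simp_all
    fix t
    assume t: "T \<le> \<bar>t\<bar>"
    have "q * H t < H (2 * t)"
      using ratio[OF t] pos[OF t] by (simp add: pos_less_divide_eq)
    moreover have "(q - 1) * m \<le> (q - 1) * H t"
      using m_le[OF t] \<open>1 < q\<close> by (intro mult_left_mono) auto
    ultimately show "0 < H t \<and> H t + (q - 1) * m \<le> H (2 * t)"
      using pos[OF t] by (simp add: algebra_simps)
  qed
qed

(* Each doubling of |x| adds d to H and thus divides exp (- b * H x) by exp (b * d) = 2 ^ 6. *)
lemma exp_decay_of_doubling_gain:
  fixes H :: "real \<Rightarrow> real"
  assumes "T > 0" "d > 0"
    and gain: "\<And>t. T \<le> \<bar>t\<bar> \<Longrightarrow> 0 \<le> H t \<and> H t + d \<le> H (2 * t)"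
    and "T \<le> \<bar>x\<bar>"
  shows "exp (- (ln 64 / d) * H x) \<le> (2 * T / \<bar>x\<bar>) ^ 6"
proof -
  define b where "b = ln 64 / d"
  have "b > 0"
    using \<open>d > 0\<close> by (simp add: b_def)
  have step: "exp (- b * H (2 * t)) \<le> exp (- b * H t) / 64" if "T \<le> \<bar>t\<bar>" for t
  proof -
    have "b * (H t + d) \<le> b * H (2 * t)"
      using gain[OF that] \<open>b > 0\<close> by (intro mult_left_mono) auto
    then have "exp (- b * H (2 * t)) \<le> exp (- b * H t) * exp (- (b * d))"
      by (simp add: exp_add[symmetric] algebra_simps)
    also have "exp (- (b * d)) = 1 / 64"
      using \<open>d > 0\<close> by (simp add: b_def exp_minus)
    finally show ?thesis by simp
  qed
  have "\<forall>x. T \<le> \<bar>x\<bar> \<and> \<bar>x\<bar> < T * 2 ^ n \<longrightarrow> exp (- b * H x) \<le> (2 * T / \<bar>x\<bar>) ^ 6" for n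
  proof (induction n)
    case 0
    then show ?case by simp
  next
    case (Suc n)
    show ?case
    proof (intro allI impI)
      fix x
      assume x: "T \<le> \<bar>x\<bar> \<and> \<bar>x\<bar> < T * 2 ^ Suc n"
      show "exp (- b * H x) \<le> (2 * T / \<bar>x\<bar>) ^ 6"
      proof (cases "\<bar>x\<bar> < 2 * T")
        case True
        have "exp (- b * H x) \<le> 1"
          using gain[of x] x \<open>b > 0\<close> by simp
        also have "1 \<le> (2 * T / \<bar>x\<bar>) ^ 6"
          using True x \<open>T > 0\<close> by (intro one_le_power) (auto simp: le_divide_eq)
        finally show ?thesis .
      next
        case False
        then have "T \<le> \<bar>x / 2\<bar> \<and> \<bar>x / 2\<bar> < T * 2 ^ n"
          using x by auto
        then have "exp (- b * H (2 * (x / 2))) \<le> (2 * T / \<bar>x / 2\<bar>) ^ 6 / 64"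
          using step[of "x / 2"] Suc.IH by fastforce
        also have "\<dots> = (2 * T / \<bar>x\<bar>) ^ 6"
          by (simp add: power_divide)
        finally show ?thesis by simp
      qed
    qed
  qed
  moreover obtain n where "\<bar>x\<bar> / T < 2 ^ n"
    using real_arch_pow[of 2 "\<bar>x\<bar> / T"] by auto
  ultimately show ?thesis
    using \<open>T \<le> \<bar>x\<bar>\<close> \<open>T > 0\<close> by (auto simp: b_def pos_divide_less_eq mult.commute)
qed

lemma one_plus_power4_mult_le:
  fixes x T e :: real
  assumes "1 \<le> T" "T \<le> \<bar>x\<bar>" "0 \<le> e" "e \<le> (2 * T / \<bar>x\<bar>) ^ 6"
  shows "(1 + x ^ 4) * e \<le> 128 * T ^ 6 / x\<^sup>2"
proof -
  have "1 \<le> x ^ 4"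
    using assms one_le_power[of "\<bar>x\<bar>" 4] by simp
  then have "x ^ 6 = x ^ 4 * x\<^sup>2" "x \<noteq> 0"
    by (auto simp flip: power_add)
  then have "(2 * x ^ 4) * (2 * T / \<bar>x\<bar>) ^ 6 = 128 * T ^ 6 / x\<^sup>2"
    by (simp add: power_divide field_simps)
  moreover have "(1 + x ^ 4) * e \<le> (2 * x ^ 4) * (2 * T / \<bar>x\<bar>) ^ 6"
    using \<open>1 \<le> x ^ 4\<close> assms by (intro mult_mono) auto
  ultimately show ?thesis
    by simp
qed

lemma regularly_varying_exp_integrable:
  fixes H :: "real \<Rightarrow> real"
  assumes regvar: "regularly_varying H"
    and unimodal: "unimodal_at0 (\<lambda>x. - H x)"
    and [measurable]: "H \<in> borel_measurable borel"
  obtains b where "b > 0" "integrable lborel (\<lambda>x. (1 + x ^ 4) * exp (- b * H x))"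
proof -
  obtain T d where "T \<ge> 1" "d > 0" and gain: "\<And>t. T \<le> \<bar>t\<bar> \<Longrightarrow> 0 < H t \<and> H t + d \<le> H (2 * t)"
    using regularly_varying_doubling_gain[OF regvar unimodal] by blast
  define b where "b = ln 64 / d"
  have "b > 0"
    using \<open>d > 0\<close> by (simp add: b_def)
  define K where "K = max ((1 + T ^ 4) * exp (- b * H 0)) (128 * T ^ 6)"
  have "integrable lborel (\<lambda>x. (1 + x ^ 4) * exp (- b * H x))"
  proof (rule integrable_inverse_square_decay[where T = T and K = K])
    fix x :: real
    assume "\<bar>x\<bar> \<le> T"
    have "H 0 \<le> H x"
      using unimodal_at0_le[OF unimodal, of x] by simp
    then have "exp (- b * H x) \<le> exp (- b * H 0)"
      using \<open>b > 0\<close> by simp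
    moreover have "x ^ 4 \<le> T ^ 4"
      using power_mono[OF \<open>\<bar>x\<bar> \<le> T\<close>, of 4] by simp
    ultimately have "(1 + x ^ 4) * exp (- b * H x) \<le> (1 + T ^ 4) * exp (- b * H 0)"
      by (intro mult_mono) auto
    then show "\<bar>(1 + x ^ 4) * exp (- b * H x)\<bar> \<le> K"
      by (simp add: K_def)
  next
    fix x :: real
    assume "T \<le> \<bar>x\<bar>"
    have "exp (- b * H x) \<le> (2 * T / \<bar>x\<bar>) ^ 6"
      unfolding b_def using \<open>T \<ge> 1\<close> \<open>d > 0\<close> gain \<open>T \<le> \<bar>x\<bar>\<close>
      by (intro exp_decay_of_doubling_gain) (auto simp: less_imp_le)
    then have "(1 + x ^ 4) * exp (- b * H x) \<le> 128 * T ^ 6 / x\<^sup>2"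
      using \<open>T \<ge> 1\<close> \<open>T \<le> \<bar>x\<bar>\<close> by (intro one_plus_power4_mult_le) auto
    also have "\<dots> \<le> K / x\<^sup>2"
      by (intro divide_right_mono) (auto simp: K_def)
    finally show "\<bar>(1 + x ^ 4) * exp (- b * H x)\<bar> \<le> K / x\<^sup>2"
      by simp
  qed (use \<open>T \<ge> 1\<close> in simp_all)
  with \<open>b > 0\<close> show thesis
    by (rule that)
qed

section \<open>Laplace's method\<close>

lemma integrable_abs_power_gaussian:
  fixes a :: real
  assumes "a > 0"
  shows "integrable lborel (\<lambda>x. \<bar>x\<bar> ^ k * exp (- a * x\<^sup>2))"
proof -
  have "integrable lborel (\<lambda>x. std_normal_density (0 + sqrt (2 * a) * x) * \<bar>0 + sqrt (2 * a) * x\<bar> ^ k)"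
    using integrable_std_normal_moment_abs by (rule lborel_integrable_real_affine) (use assms in simp)
  then have "integrable lborel (\<lambda>x. (sqrt (2 * pi) / sqrt (2 * a) ^ k) *
      (std_normal_density (sqrt (2 * a) * x) * \<bar>sqrt (2 * a) * x\<bar> ^ k))"
    by simp
  moreover have "(sqrt (2 * pi) / sqrt (2 * a) ^ k) * (std_normal_density (sqrt (2 * a) * x) * \<bar>sqrt (2 * a) * x\<bar> ^ k)
      = \<bar>x\<bar> ^ k * exp (- a * x\<^sup>2)" for x
    using assms by (simp add: std_normal_density_def abs_mult power_mult_distrib)
  ultimately show ?thesis
    by simp
qed

lemma integral_abs_power_gaussian_scale:
  fixes a s :: real
  assumes "a > 0" "s > 0"
  shows "(\<integral>x. \<bar>x\<bar> ^ k * exp (- a * (s * x)\<^sup>2) \<partial>lborel) = (\<integral>y. \<bar>y\<bar> ^ k * exp (- a * y\<^sup>2) \<partial>lborel) / s ^ (k + 1)"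
proof -
  have "(\<integral>y. \<bar>y\<bar> ^ k * exp (- a * y\<^sup>2) \<partial>lborel)
      = \<bar>s\<bar> *\<^sub>R (\<integral>x. \<bar>0 + s * x\<bar> ^ k * exp (- a * (0 + s * x)\<^sup>2) \<partial>lborel)"
    using assms by (intro lborel_integral_real_affine) simp
  also have "\<dots> = s ^ (k + 1) * (\<integral>x. \<bar>x\<bar> ^ k * exp (- a * (s * x)\<^sup>2) \<partial>lborel)"
    using assms by (simp add: abs_mult power_mult_distrib mult_ac)
  finally show ?thesis
    using assms by simp
qed

lemma exp_neg_le_27_div_cube:
  fixes x :: real
  assumes "x > 0"
  shows "exp (- x) \<le> 27 / x ^ 3"
proof -
  have "x / 3 \<le> exp (x / 3)"
    using exp_ge_add_one_self[of "x / 3"] by linarith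
  then have "(x / 3) ^ 3 \<le> exp (x / 3) ^ 3"
    using assms by (intro power_mono) auto
  also have "\<dots> = exp x"
    by (simp flip: exp_of_nat_mult)
  finally show ?thesis
    using assms by (simp add: exp_minus field_simps)
qed

lemma abs_power_le_1_plus_power4:
  fixes x :: real
  assumes "k \<le> 4"
  shows "\<bar>x\<bar> ^ k \<le> 1 + x ^ 4"
proof (cases "\<bar>x\<bar> \<le> 1")
  case True
  then have "\<bar>x\<bar> ^ k \<le> 1"
    by (simp add: power_le_one)
  then show ?thesis
    by (simp add: add_increasing2)
next
  case False
  then have "\<bar>x\<bar> ^ k \<le> \<bar>x\<bar> ^ 4"
    using assms by (intro power_increasing) auto
  then show ?thesis
    by simp
qed

lemma Ebeta_exp:
  "Ebeta (\<lambda>x. exp (u x)) \<beta> \<phi> = (\<integral>x. \<phi> x * exp (\<beta> * u x) \<partial>lborel) / (\<integral>x. exp (\<beta> * u x) \<partial>lborel)"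
  by (simp add: Ebeta_def exp_powr_real mult.commute)

(* u stands for log f - log f 0, so that exp (beta * u x) is f x ^ beta up to a constant factor. *)
locale laplace_weight =
  fixes u :: "real \<Rightarrow> real" and c \<delta> \<eta> b :: real
  assumes measurable_u [measurable]: "u \<in> borel_measurable borel"
    and c_pos: "c > 0" and \<delta>_pos: "\<delta> > 0" and \<eta>_pos: "\<eta> > 0" and b_pos: "b > 0"
    and quadratic_near_0: "\<And>x. \<bar>x\<bar> \<le> \<delta> \<Longrightarrow> - c * x\<^sup>2 \<le> u x \<and> u x \<le> - (c / 4) * x\<^sup>2"
    and tail: "\<And>x. \<delta> \<le> \<bar>x\<bar> \<Longrightarrow> u x \<le> - \<eta>"
    and integrable_b: "integrable lborel (\<lambda>x. (1 + x ^ 4) * exp (b * u x))"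
begin

lemma u_nonpos: "u x \<le> 0"
proof (cases "\<bar>x\<bar> \<le> \<delta>")
  case True
  moreover have "0 \<le> (c / 4) * x\<^sup>2"
    using c_pos by simp
  ultimately show ?thesis
    using quadratic_near_0[of x] by linarith
next
  case False
  then show ?thesis
    using tail[of x] \<eta>_pos by simp
qed

lemma integrable_moment:
  assumes "b \<le> \<beta>" "k \<le> 4"
  shows "integrable lborel (\<lambda>x. \<bar>x\<bar> ^ k * exp (\<beta> * u x))"
proof (rule Bochner_Integration.integrable_bound[OF integrable_b])
  have "\<bar>x\<bar> ^ k \<le> 1 + x ^ 4" for x :: real
    using \<open>k \<le> 4\<close> by (rule abs_power_le_1_plus_power4)
  moreover have "exp (\<beta> * u x) \<le> exp (b * u x)" for x
    using u_nonpos[of x] \<open>b \<le> \<beta>\<close> by (simp add: mult_right_mono_neg)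
  ultimately show "AE x in lborel. norm (\<bar>x\<bar> ^ k * exp (\<beta> * u x)) \<le> norm ((1 + x ^ 4) * exp (b * u x))"
    by (intro AE_I2) (simp add: abs_mult mult_mono add_nonneg_nonneg)
qed simp

lemma normaliser_lower_bound:
  assumes "b \<le> \<beta>" "1 / (c * \<delta>\<^sup>2) \<le> \<beta>"
  shows "2 / (exp 1 * sqrt (c * \<beta>)) \<le> (\<integral>x. exp (\<beta> * u x) \<partial>lborel)"
proof -
  define r where "r = 1 / sqrt (c * \<beta>)"
  have "\<beta> > 0"
    using assms b_pos by linarith
  then have "r > 0" and r2: "c * \<beta> * r\<^sup>2 = 1"
    using c_pos by (simp_all add: r_def power_divide)
  have "1 \<le> \<beta> * (c * \<delta>\<^sup>2)"
    using assms(2) c_pos \<delta>_pos by (simp add: pos_divide_le_eq)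
  then have "r\<^sup>2 \<le> \<delta>\<^sup>2"
    using c_pos \<open>\<beta> > 0\<close> by (simp add: r_def power_divide pos_divide_le_eq mult_ac)
  then have "r \<le> \<delta>"
    using \<delta>_pos by (simp add: power2_le_iff_abs_le)
  have "indicator {-r..r} x * exp (- 1) \<le> exp (\<beta> * u x)" for x
  proof (cases "\<bar>x\<bar> \<le> r")
    case True
    then have "c * x\<^sup>2 \<le> c * r\<^sup>2"
      using c_pos power_mono[of "\<bar>x\<bar>" r 2] by (intro mult_left_mono) auto
    then have "- 1 \<le> \<beta> * (- c * x\<^sup>2)"
      using r2 \<open>\<beta> > 0\<close> mult_left_mono[of "c * x\<^sup>2" "c * r\<^sup>2" \<beta>] by (simp add: algebra_simps)
    also have "\<dots> \<le> \<beta> * u x"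
      using quadratic_near_0[of x] True \<open>r \<le> \<delta>\<close> \<open>\<beta> > 0\<close> by (intro mult_left_mono) auto
    finally show ?thesis
      using True by (simp add: indicator_def)
  qed (auto simp: indicator_def)
  then have "(\<integral>x. indicator {-r..r} x * exp (- 1) \<partial>lborel) \<le> (\<integral>x. exp (\<beta> * u x) \<partial>lborel)"
    using integrable_moment[of \<beta> 0] \<open>b \<le> \<beta>\<close> by (intro integral_mono') auto
  moreover have "(\<integral>x. indicator {-r..r} x * exp (- 1) \<partial>lborel) = 2 * r * exp (- 1)"
    using \<open>r > 0\<close> by simp
  moreover have "2 * r * exp (- 1) = 2 / (exp 1 * sqrt (c * \<beta>))"
    by (simp add: r_def exp_minus divide_inverse)
  ultimately show ?thesis
    by simp
qed

lemma moment_integrand_le: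
  assumes "b \<le> \<beta>" "k \<le> 4"
  shows "\<bar>x\<bar> ^ k * exp (\<beta> * u x)
    \<le> \<bar>x\<bar> ^ k * exp (- (c / 4) * (sqrt \<beta> * x)\<^sup>2) + exp (- (\<beta> - b) * \<eta>) * ((1 + x ^ 4) * exp (b * u x))"
proof (cases "\<bar>x\<bar> \<le> \<delta>")
  case True
  have "\<beta> > 0"
    using assms b_pos by linarith
  with True have "\<beta> * u x \<le> - (c / 4) * (sqrt \<beta> * x)\<^sup>2"
    using quadratic_near_0[of x] mult_left_mono[of "u x" "- (c / 4) * x\<^sup>2" \<beta>]
    by (simp add: power_mult_distrib mult_ac)
  then have "\<bar>x\<bar> ^ k * exp (\<beta> * u x) \<le> \<bar>x\<bar> ^ k * exp (- (c / 4) * (sqrt \<beta> * x)\<^sup>2)"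
    by (simp add: mult_left_mono)
  then show ?thesis
    by (simp add: add_increasing2)
next
  case False
  then have "(\<beta> - b) * u x \<le> - (\<beta> - b) * \<eta>"
    using tail[of x] \<open>b \<le> \<beta>\<close> mult_left_mono[of "u x" "- \<eta>" "\<beta> - b"] by (simp add: algebra_simps)
  then have "exp (\<beta> * u x) \<le> exp (- (\<beta> - b) * \<eta>) * exp (b * u x)"
    by (simp add: algebra_simps flip: exp_add)
  then have "\<bar>x\<bar> ^ k * exp (\<beta> * u x) \<le> (1 + x ^ 4) * (exp (- (\<beta> - b) * \<eta>) * exp (b * u x))"
    using abs_power_le_1_plus_power4[OF \<open>k \<le> 4\<close>, of x] by (intro mult_mono) auto
  then show ?thesis
    by (simp add: mult_ac add_increasing)
qed

lemma moment_upper_bound: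
  assumes "b \<le> \<beta>" "k \<le> 4"
  shows "(\<integral>x. \<bar>x\<bar> ^ k * exp (\<beta> * u x) \<partial>lborel)
    \<le> (\<integral>y. \<bar>y\<bar> ^ k * exp (- (c / 4) * y\<^sup>2) \<partial>lborel) / sqrt \<beta> ^ (k + 1)
      + exp (- (\<beta> - b) * \<eta>) * (\<integral>x. (1 + x ^ 4) * exp (b * u x) \<partial>lborel)"
proof -
  have "\<beta> > 0"
    using assms b_pos by linarith
  define gauss where "gauss x = \<bar>x\<bar> ^ k * exp (- (c / 4) * (sqrt \<beta> * x)\<^sup>2)" for x
  have "gauss = (\<lambda>x. \<bar>x\<bar> ^ k * exp (- (c / 4 * \<beta>) * x\<^sup>2))"
    using \<open>\<beta> > 0\<close> by (simp add: gauss_def fun_eq_iff power_mult_distrib)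
  then have "integrable lborel gauss"
    using integrable_abs_power_gaussian[of "c / 4 * \<beta>" k] c_pos \<open>\<beta> > 0\<close> by simp
  have "\<bar>x\<bar> ^ k * exp (\<beta> * u x) \<le> gauss x + exp (- (\<beta> - b) * \<eta>) * ((1 + x ^ 4) * exp (b * u x))" for x
    unfolding gauss_def by (rule moment_integrand_le[OF assms])
  moreover have "0 \<le> gauss x" for x
    by (simp add: gauss_def)
  ultimately have "(\<integral>x. \<bar>x\<bar> ^ k * exp (\<beta> * u x) \<partial>lborel)
      \<le> (\<integral>x. gauss x + exp (- (\<beta> - b) * \<eta>) * ((1 + x ^ 4) * exp (b * u x)) \<partial>lborel)"
    using \<open>integrable lborel gauss\<close> integrable_b
    by (intro integral_mono' Bochner_Integration.integrable_add integrable_mult_right)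
      (auto intro!: add_nonneg_nonneg)
  also have "\<dots> = (\<integral>x. gauss x \<partial>lborel) + exp (- (\<beta> - b) * \<eta>) * (\<integral>x. (1 + x ^ 4) * exp (b * u x) \<partial>lborel)"
    using \<open>integrable lborel gauss\<close> integrable_b by simp
  also have "(\<integral>x. gauss x \<partial>lborel) = (\<integral>y. \<bar>y\<bar> ^ k * exp (- (c / 4) * y\<^sup>2) \<partial>lborel) / sqrt \<beta> ^ (k + 1)"
    unfolding gauss_def using c_pos \<open>\<beta> > 0\<close> by (intro integral_abs_power_gaussian_scale) auto
  finally show ?thesis .
qed

lemma moment_power_bound:
  assumes "b \<le> \<beta>" "1 \<le> \<beta>" "k \<le> 4"
  shows "(\<integral>x. \<bar>x\<bar> ^ k * exp (\<beta> * u x) \<partial>lborel)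
    \<le> ((\<integral>y. \<bar>y\<bar> ^ k * exp (- (c / 4) * y\<^sup>2) \<partial>lborel)
        + 27 * exp (b * \<eta>) * (\<integral>x. (1 + x ^ 4) * exp (b * u x) \<partial>lborel) / \<eta> ^ 3) / sqrt \<beta> ^ (k + 1)"
proof -
  define I where "I = (\<integral>x. (1 + x ^ 4) * exp (b * u x) \<partial>lborel)"
  define s where "s = sqrt \<beta>"
  have "I \<ge> 0"
    by (auto simp: I_def intro!: integral_nonneg_AE add_nonneg_nonneg)
  have "s \<ge> 1" "s\<^sup>2 = \<beta>"
    using \<open>1 \<le> \<beta>\<close> by (simp_all add: s_def)
  then have "s ^ 6 = \<beta> ^ 3"
    by (simp flip: \<open>s\<^sup>2 = \<beta>\<close> power_mult)
  have "exp (- (\<beta> - b) * \<eta>) * I = exp (b * \<eta>) * exp (- (\<beta> * \<eta>)) * I"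
    by (simp add: algebra_simps flip: exp_add)
  also have "\<dots> \<le> exp (b * \<eta>) * (27 / (\<beta> * \<eta>) ^ 3) * I"
    using exp_neg_le_27_div_cube[of "\<beta> * \<eta>"] \<eta>_pos \<open>1 \<le> \<beta>\<close> \<open>I \<ge> 0\<close>
    by (intro mult_right_mono mult_left_mono) auto
  also have "\<dots> = 27 * exp (b * \<eta>) * I / \<eta> ^ 3 / s ^ 6"
    using \<open>s ^ 6 = \<beta> ^ 3\<close> by (simp add: power_mult_distrib mult_ac)
  also have "\<dots> \<le> 27 * exp (b * \<eta>) * I / \<eta> ^ 3 / s ^ (k + 1)"
    using \<open>s \<ge> 1\<close> \<open>k \<le> 4\<close> \<open>I \<ge> 0\<close> \<eta>_pos
    by (intro divide_left_mono power_increasing) auto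
  finally show ?thesis
    using moment_upper_bound[OF \<open>b \<le> \<beta>\<close> \<open>k \<le> 4\<close>] by (simp add: I_def s_def add_divide_distrib)
qed

lemma normalised_moment_bound:
  obtains \<beta>0 C where
    "\<And>\<beta> k. \<beta>0 \<le> \<beta> \<Longrightarrow> k \<le> 4 \<Longrightarrow> integrable lborel (\<lambda>x. \<bar>x\<bar> ^ k * exp (u x) powr \<beta>)"
    "\<And>\<beta> k. \<beta>0 \<le> \<beta> \<Longrightarrow> k \<le> 4 \<Longrightarrow> Ebeta (\<lambda>x. exp (u x)) \<beta> (\<lambda>x. \<bar>x\<bar> ^ k) \<le> C k / sqrt \<beta> ^ k"
proof -
  define A where "A k = (\<integral>y. \<bar>y\<bar> ^ k * exp (- (c / 4) * y\<^sup>2) \<partial>lborel)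
    + 27 * exp (b * \<eta>) * (\<integral>x. (1 + x ^ 4) * exp (b * u x) \<partial>lborel) / \<eta> ^ 3" for k :: nat
  define z where "z = 2 / (exp 1 * sqrt c)"
  have "z > 0"
    using c_pos by (simp add: z_def)
  show thesis
  proof (rule that[of "max b (max 1 (1 / (c * \<delta>\<^sup>2)))"])
    fix \<beta> :: real and k :: nat
    assume "max b (max 1 (1 / (c * \<delta>\<^sup>2))) \<le> \<beta>" "k \<le> 4"
    then have "b \<le> \<beta>" "1 \<le> \<beta>" "1 / (c * \<delta>\<^sup>2) \<le> \<beta>"
      by auto
    show "integrable lborel (\<lambda>x. \<bar>x\<bar> ^ k * exp (u x) powr \<beta>)"
      using integrable_moment[OF \<open>b \<le> \<beta>\<close> \<open>k \<le> 4\<close>] by (simp add: exp_powr_real mult.commute)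
    define s where "s = sqrt \<beta>"
    define Z where "Z = (\<integral>x. exp (\<beta> * u x) \<partial>lborel)"
    define J where "J = (\<integral>x. \<bar>x\<bar> ^ k * exp (\<beta> * u x) \<partial>lborel)"
    have "s \<ge> 1"
      using \<open>1 \<le> \<beta>\<close> by (simp add: s_def)
    have "z / s \<le> Z"
      using normaliser_lower_bound[OF \<open>b \<le> \<beta>\<close> \<open>1 / (c * \<delta>\<^sup>2) \<le> \<beta>\<close>]
      by (simp add: Z_def z_def s_def real_sqrt_mult mult_ac)
    moreover have "0 < z / s"
      using \<open>z > 0\<close> \<open>s \<ge> 1\<close> by simp
    ultimately have "0 < Z * (z / s)"
      by (intro mult_pos_pos) auto
    then have "J / Z \<le> J / (z / s)"
      using \<open>z / s \<le> Z\<close> by (intro divide_left_mono) (auto simp: J_def intro!: integral_nonneg_AE)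
    also have "\<dots> = (J * s) / z"
      by simp
    also have "\<dots> \<le> (A k / s ^ (k + 1) * s) / z"
      using moment_power_bound[OF \<open>b \<le> \<beta>\<close> \<open>1 \<le> \<beta>\<close> \<open>k \<le> 4\<close>] \<open>z > 0\<close> \<open>s \<ge> 1\<close>
      by (intro divide_right_mono mult_right_mono) (auto simp: J_def A_def s_def)
    also have "\<dots> = (A k / z) / s ^ k"
      using \<open>s \<ge> 1\<close> by simp
    finally show "Ebeta (\<lambda>x. exp (u x)) \<beta> (\<lambda>x. \<bar>x\<bar> ^ k) \<le> (A k / z) / sqrt \<beta> ^ k"
      by (simp add: Ebeta_exp J_def Z_def s_def)
  qed
qed

end

lemma abs_Ebeta_le:
  assumes "integrable lborel (\<lambda>x. \<psi> x * f x powr \<beta>)" and "\<And>x. \<bar>\<phi> x\<bar> \<le> \<psi> x"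
  shows "\<bar>Ebeta f \<beta> \<phi>\<bar> \<le> Ebeta f \<beta> \<psi>"
proof -
  have "\<bar>\<integral>x. \<phi> x * f x powr \<beta> \<partial>lborel\<bar> \<le> (\<integral>x. \<bar>\<phi> x * f x powr \<beta>\<bar> \<partial>lborel)"
    using integral_norm_bound[of lborel "\<lambda>x. \<phi> x * f x powr \<beta>"] by simp
  also have "\<dots> \<le> (\<integral>x. \<psi> x * f x powr \<beta> \<partial>lborel)"
  proof (rule integral_mono'[OF assms(1)])
    fix x
    have "0 \<le> \<psi> x"
      using assms(2)[of x] by linarith
    then show "0 \<le> \<psi> x * f x powr \<beta>"
      by simp
    show "\<bar>\<phi> x * f x powr \<beta>\<bar> \<le> \<psi> x * f x powr \<beta>"
      using assms(2)[of x] by (simp add: abs_mult mult_right_mono)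
  qed
  finally have "\<bar>\<integral>x. \<phi> x * f x powr \<beta> \<partial>lborel\<bar> \<le> (\<integral>x. \<psi> x * f x powr \<beta> \<partial>lborel)" .
  moreover have "0 \<le> (\<integral>x. f x powr \<beta> \<partial>lborel)"
    by (auto intro!: integral_nonneg_AE)
  ultimately show ?thesis
    unfolding Ebeta_def abs_divide by (simp add: divide_right_mono)
qed

lemma Ebeta_linear:
  assumes "integrable lborel (\<lambda>x. \<phi> x * f x powr \<beta>)" "integrable lborel (\<lambda>x. \<psi> x * f x powr \<beta>)"
  shows "Ebeta f \<beta> (\<lambda>x. a * \<phi> x + b * \<psi> x) = a * Ebeta f \<beta> \<phi> + b * Ebeta f \<beta> \<psi>"
  using assms by (simp add: Ebeta_def distrib_right add_divide_distrib mult.assoc)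

lemma Ebeta_cmult:
  assumes "a > 0" "\<And>x. g x \<ge> 0"
  shows "Ebeta (\<lambda>x. a * g x) \<beta> \<phi> = Ebeta g \<beta> \<phi>"
proof -
  have "(a * g x) powr \<beta> = a powr \<beta> * g x powr \<beta>" for x
    using assms by (simp add: powr_mult)
  then show ?thesis
    using \<open>a > 0\<close> by (simp add: Ebeta_def mult.left_commute[of "\<phi> _"])
qed

lemma bigo_of_sqrt_power_bound:
  fixes F :: "real \<Rightarrow> real"
  assumes "\<And>\<beta>. \<beta>0 \<le> \<beta> \<Longrightarrow> \<bar>F \<beta>\<bar> \<le> K / sqrt \<beta> ^ n"
  shows "(\<lambda>\<beta>. F \<beta> / (4 * \<beta>)) \<in> O[at_top](\<lambda>\<beta>. \<beta> powr (- (real n / 2 + 1)))"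
proof (rule bigoI)
  show "\<forall>\<^sub>F \<beta> in at_top. norm (F \<beta> / (4 * \<beta>)) \<le> K / 4 * norm (\<beta> powr (- (real n / 2 + 1)))"
  proof (rule eventually_at_top_linorderI[of "max \<beta>0 1"])
    fix \<beta> :: real
    assume "max \<beta>0 1 \<le> \<beta>"
    then have "\<beta> > 0" "\<beta>0 \<le> \<beta>"
      by auto
    have "\<beta> powr (real n / 2) = sqrt \<beta> ^ n"
      using \<open>\<beta> > 0\<close> by (simp add: powr_half_sqrt_powr powr_realpow real_sqrt_power)
    then have "\<beta> powr (real n / 2 + 1) = sqrt \<beta> ^ n * \<beta>"
      using \<open>\<beta> > 0\<close> by (simp add: powr_add)
    then have powr_eq: "\<beta> powr (- (real n / 2 + 1)) = 1 / (sqrt \<beta> ^ n * \<beta>)"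
      by (simp only: powr_minus_divide)
    have "norm (F \<beta> / (4 * \<beta>)) = \<bar>F \<beta>\<bar> / (4 * \<beta>)"
      using \<open>\<beta> > 0\<close> by (simp add: abs_divide)
    also have "\<dots> \<le> K / sqrt \<beta> ^ n / (4 * \<beta>)"
      using assms[OF \<open>\<beta>0 \<le> \<beta>\<close>] \<open>\<beta> > 0\<close> by (intro divide_right_mono) auto
    also have "\<dots> = K / 4 / (sqrt \<beta> ^ n * \<beta>)"
      by (simp add: mult_ac)
    also have "\<dots> = K / 4 * norm (\<beta> powr (- (real n / 2 + 1)))"
      unfolding powr_eq using \<open>\<beta> > 0\<close> by simp
    finally show "norm (F \<beta> / (4 * \<beta>)) \<le> K / 4 * norm (\<beta> powr (- (real n / 2 + 1)))" .
  qed
qed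

lemma logf_critical_at_0:
  fixes f :: "real \<Rightarrow> real"
  assumes pos: "\<And>x. f x > 0" and C4: "C4 f" and unimodal: "unimodal_at0 f"
  shows "deriv (logf f) 0 = 0"
proof -
  have "(logf f has_real_derivative deriv (logf f) 0) (at 0)"
    using logf_iterated_derivatives[OF pos C4, of 0 0] by simp
  then show ?thesis
    by (rule DERIV_local_max[of _ _ _ 1]) (use unimodal_at0_le[OF unimodal_at0_logf[OF pos unimodal]] in auto)
qed

lemma logf_continuous:
  fixes f :: "real \<Rightarrow> real"
  assumes "\<And>x. f x > 0" "C4 f"
  shows "continuous_on UNIV (logf f)"
  using logf_iterated_derivatives[OF assms, of 0]
  by (intro continuous_at_imp_continuous_on) (auto dest: DERIV_isCont)

lemma logf_exp_integrable:
  fixes f H :: "real \<Rightarrow> real"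
  assumes pos: "\<And>x. f x > 0" and C4: "C4 f" and unimodal: "unimodal_at0 f"
    and H: "\<And>x. f x = exp (- H x)" and regvar: "regularly_varying H"
  obtains b where "b > 0" "integrable lborel (\<lambda>x. (1 + x ^ 4) * exp (b * (logf f x - logf f 0)))"
proof -
  define h where "h = logf f"
  have H_eq: "H = (\<lambda>x. - h x)"
    by (simp add: fun_eq_iff h_def logf_def H)
  have "unimodal_at0 (\<lambda>x. - H x)"
    using unimodal_at0_logf[OF pos unimodal] by (simp add: H_eq h_def)
  moreover have "H \<in> borel_measurable borel"
    using borel_measurable_continuous_onI[OF logf_continuous[OF pos C4]] by (simp add: H_eq h_def)
  ultimately obtain b where "b > 0" and int: "integrable lborel (\<lambda>x. (1 + x ^ 4) * exp (- b * H x))"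
    using regularly_varying_exp_integrable[OF regvar] by blast
  have reweight: "(1 + x ^ 4) * exp (b * (h x - h 0)) = exp (- b * h 0) * ((1 + x ^ 4) * exp (- b * H x))" for x
    by (simp add: H_eq right_diff_distrib exp_diff exp_minus divide_inverse mult_ac)
  have "integrable lborel (\<lambda>x. exp (- b * h 0) * ((1 + x ^ 4) * exp (- b * H x)))"
    using int by simp
  then have "integrable lborel (\<lambda>x. (1 + x ^ 4) * exp (b * (h x - h 0)))"
    by (simp only: reweight)
  with \<open>b > 0\<close> show thesis
    unfolding h_def by (rule that)
qed

lemma logf_laplace_weight:
  fixes f H :: "real \<Rightarrow> real"
  assumes pos: "\<And>x. f x > 0" and C4: "C4 f" and unimodal: "unimodal_at0 f"
    and H: "\<And>x. f x = exp (- H x)" and regvar: "regularly_varying H"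
    and curv: "(deriv ^^ 2) (logf f) 0 < 0"
  obtains \<delta> \<eta> b where "laplace_weight (\<lambda>x. logf f x - logf f 0) (- (deriv ^^ 2) (logf f) 0) \<delta> \<eta> b"
proof -
  define D where "D n = (deriv ^^ n) (logf f)" for n
  have D: "(D m has_real_derivative D (Suc m) x) (at x)" if "m < 3" for m x
    using logf_iterated_derivatives[OF pos C4, of m x] that by (simp add: D_def)
  moreover have "D 1 0 = 0"
    using logf_critical_at_0[OF pos C4 unimodal] by (simp add: D_def)
  moreover have "D 2 0 < 0"
    using curv by (simp add: D_def)
  ultimately obtain \<delta> where "\<delta> > 0"
    and near: "\<And>x. \<bar>x\<bar> \<le> \<delta> \<Longrightarrow> D 2 0 * x\<^sup>2 \<le> D 0 x - D 0 0 \<and> D 0 x - D 0 0 \<le> D 2 0 / 4 * x\<^sup>2"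
    using quadratic_bounds_near_critical_point[of D] by blast
  define c where "c = - D 2 0"
  define \<eta> where "\<eta> = c / 4 * \<delta>\<^sup>2"
  have tail: "logf f x - logf f 0 \<le> - \<eta>" if "\<delta> \<le> \<bar>x\<bar>" for x
    using unimodal_at0_tail[OF unimodal_at0_logf[OF pos unimodal], of \<delta> "logf f 0 - \<eta>" x]
      near[of \<delta>] near[of "- \<delta>"] that \<open>\<delta> > 0\<close>
    by (simp add: D_def c_def \<eta>_def)
  obtain b where "b > 0" "integrable lborel (\<lambda>x. (1 + x ^ 4) * exp (b * (logf f x - logf f 0)))"
    using logf_exp_integrable[OF pos C4 unimodal H regvar] by blast
  moreover have "c > 0" "\<eta> > 0"
    using \<open>D 2 0 < 0\<close> \<open>\<delta> > 0\<close> by (simp_all add: c_def \<eta>_def mult_neg_pos)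
  moreover have "(\<lambda>x. logf f x - logf f 0) \<in> borel_measurable borel"
    using borel_measurable_continuous_onI[OF logf_continuous[OF pos C4]] by simp
  ultimately have "laplace_weight (\<lambda>x. logf f x - logf f 0) c \<delta> \<eta> b"
    using \<open>\<delta> > 0\<close> near tail by unfold_locales (auto simp: D_def c_def)
  then show thesis
    by (intro that) (simp add: c_def D_def)
qed

lemma Ebeta_logf_shift:
  fixes f :: "real \<Rightarrow> real"
  assumes pos: "\<And>x. f x > 0"
  shows "Ebeta f \<beta> \<phi> = Ebeta (\<lambda>x. exp (logf f x - logf f 0)) \<beta> \<phi>"
proof -
  have "f 0 \<noteq> 0"
    using pos[of 0] by simp
  then have "f = (\<lambda>x. f 0 * exp (logf f x - logf f 0))"
    using pos by (simp add: fun_eq_iff logf_def exp_diff)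
  then show ?thesis
    using pos[of 0] by (metis Ebeta_cmult exp_ge_zero)
qed

lemma logf_abs_r_minus_k_le:
  fixes f :: "real \<Rightarrow> real"
  assumes pos: "\<And>x. f x > 0" and C4: "C4 f" and unimodal: "unimodal_at0 f"
    and M: "\<And>x. \<bar>(deriv ^^ 4) (logf f) x\<bar> \<le> M"
  shows "\<bar>x\<^sup>2 * (deriv ^^ 2) (logf f) x - x * deriv (logf f) x\<bar>
    \<le> \<bar>(deriv ^^ 3) (logf f) 0\<bar> / 2 * \<bar>x\<bar> ^ 3 + M * \<bar>x\<bar> ^ 4"
proof -
  define D where "D n = (deriv ^^ n) (logf f)" for n
  have "(D m has_real_derivative D (Suc m) x) (at x)" if "m < 4" for m x
    using logf_iterated_derivatives[OF pos C4, of m x] that by (simp add: D_def)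
  moreover have "D 1 0 = 0"
    using logf_critical_at_0[OF pos C4 unimodal] by (simp add: D_def)
  moreover have "\<bar>D 4 x\<bar> \<le> M" for x
    using M by (simp add: D_def)
  ultimately show ?thesis
    using abs_r_minus_k_le[of D] by (simp add: D_def)
qed

lemma abs_Ebeta_le_moments:
  assumes "integrable lborel (\<lambda>x. \<bar>x\<bar> ^ 3 * f x powr \<beta>)" "integrable lborel (\<lambda>x. \<bar>x\<bar> ^ 4 * f x powr \<beta>)"
    and "\<And>x. \<bar>\<phi> x\<bar> \<le> a * \<bar>x\<bar> ^ 3 + M * \<bar>x\<bar> ^ 4"
  shows "\<bar>Ebeta f \<beta> \<phi>\<bar> \<le> a * Ebeta f \<beta> (\<lambda>x. \<bar>x\<bar> ^ 3) + M * Ebeta f \<beta> (\<lambda>x. \<bar>x\<bar> ^ 4)"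
proof -
  have "\<bar>Ebeta f \<beta> \<phi>\<bar> \<le> Ebeta f \<beta> (\<lambda>x. a * \<bar>x\<bar> ^ 3 + M * \<bar>x\<bar> ^ 4)"
    using assms by (intro abs_Ebeta_le) (auto simp: distrib_right mult.assoc)
  also have "\<dots> = a * Ebeta f \<beta> (\<lambda>x. \<bar>x\<bar> ^ 3) + M * Ebeta f \<beta> (\<lambda>x. \<bar>x\<bar> ^ 4)"
    using assms(1,2) by (rule Ebeta_linear)
  finally show ?thesis .
qed

lemma Rfun_bound:
  fixes f :: "real \<Rightarrow> real" and M :: real
  assumes pos: "\<And>x. f x > 0" and C4: "C4 f" and unimodal: "unimodal_at0 f"
    and M: "\<And>x. \<bar>(deriv ^^ 4) (logf f) x\<bar> \<le> M"
    and laplace: "laplace_weight (\<lambda>x. logf f x - logf f 0) c \<delta> \<eta> b"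
  obtains \<beta>0 K where "K \<ge> 0"
    "\<And>\<beta>. \<beta>0 \<le> \<beta> \<Longrightarrow> \<bar>Rfun f \<beta>\<bar> \<le> \<bar>(deriv ^^ 3) (logf f) 0\<bar> / 2 * K / sqrt \<beta> ^ 3 + K / sqrt \<beta> ^ 4"
proof -
  define u where "u x = logf f x - logf f 0" for x
  interpret laplace_weight u c \<delta> \<eta> b
    using laplace by (simp add: u_def[abs_def])
  obtain \<beta>0 C where integrable:
      "\<And>\<beta> k. \<beta>0 \<le> \<beta> \<Longrightarrow> k \<le> 4 \<Longrightarrow> integrable lborel (\<lambda>x. \<bar>x\<bar> ^ k * exp (u x) powr \<beta>)"
    and moment: "\<And>\<beta> k. \<beta>0 \<le> \<beta> \<Longrightarrow> k \<le> 4 \<Longrightarrow> Ebeta (\<lambda>x. exp (u x)) \<beta> (\<lambda>x. \<bar>x\<bar> ^ k) \<le> C k / sqrt \<beta> ^ k"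
    using normalised_moment_bound by blast
  define a where "a = \<bar>(deriv ^^ 3) (logf f) 0\<bar> / 2"
  define K where "K = \<bar>C 3\<bar> + \<bar>M * C 4\<bar>"
  have "M \<ge> 0"
    using M[of 0] by linarith
  (* sqrt is odd on the reals, so beta must be nonnegative for sqrt beta ^ 3 to be. *)
  show thesis
  proof (rule that[of K "max \<beta>0 0"])
    show "K \<ge> 0"
      by (simp add: K_def)
    fix \<beta> :: real
    assume "max \<beta>0 0 \<le> \<beta>"
    then have "\<beta>0 \<le> \<beta>" "0 \<le> \<beta>"
      by auto
    have "\<bar>Rfun f \<beta>\<bar> \<le> a * Ebeta (\<lambda>x. exp (u x)) \<beta> (\<lambda>x. \<bar>x\<bar> ^ 3) + M * Ebeta (\<lambda>x. exp (u x)) \<beta> (\<lambda>x. \<bar>x\<bar> ^ 4)"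
      unfolding Rfun_def Ebeta_logf_shift[OF pos] u_def[symmetric]
      using integrable[OF \<open>\<beta>0 \<le> \<beta>\<close>, of 3] integrable[OF \<open>\<beta>0 \<le> \<beta>\<close>, of 4]
        logf_abs_r_minus_k_le[OF pos C4 unimodal M]
      by (intro abs_Ebeta_le_moments) (simp_all add: a_def)
    also have "\<dots> \<le> a * (C 3 / sqrt \<beta> ^ 3) + M * (C 4 / sqrt \<beta> ^ 4)"
      using moment[OF \<open>\<beta>0 \<le> \<beta>\<close>, of 3] moment[OF \<open>\<beta>0 \<le> \<beta>\<close>, of 4] \<open>M \<ge> 0\<close>
      by (intro add_mono mult_left_mono) (auto simp: a_def)
    also have "\<dots> \<le> a * (K / sqrt \<beta> ^ 3) + K / sqrt \<beta> ^ 4"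
    proof (intro add_mono mult_left_mono divide_right_mono)
      have "M * C 4 \<le> K"
        by (simp add: K_def)
      then show "M * (C 4 / sqrt \<beta> ^ 4) \<le> K / sqrt \<beta> ^ 4"
        by (simp add: divide_right_mono)
    qed (use \<open>0 \<le> \<beta>\<close> in \<open>auto simp: a_def K_def\<close>)
    finally show "\<bar>Rfun f \<beta>\<bar> \<le> \<bar>(deriv ^^ 3) (logf f) 0\<bar> / 2 * K / sqrt \<beta> ^ 3 + K / sqrt \<beta> ^ 4"
      by (simp add: a_def)
  qed
qed

theorem lemma5:
  fixes f H :: "real \<Rightarrow> real" and M :: real
  assumes pos: "\<And>x. f x > 0"
    and C4: "C4 f"
    and unimodal: "unimodal_at0 f"
    and H: "\<And>x. f x = exp (- H x)"
    and regvar: "regularly_varying H"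
    and M: "M > 0" "\<And>x. \<bar>(deriv ^^ 4) (logf f) x\<bar> < M"
    and curv: "(deriv ^^ 2) (logf f) 0 < 0"
    and var: "\<exists>\<gamma>>0. (\<lambda>\<beta>. \<bar>dvar (gbeta f \<beta>) (\<lambda>y. y\<^sup>2) - 2\<bar>) \<in> O[at_top](\<lambda>\<beta>. \<beta> powr (- \<gamma>))"
  shows "(\<lambda>\<beta>. Rfun f \<beta> / (4 * \<beta>)) \<in>
           O[at_top](\<lambda>\<beta>. \<beta> powr (- (if (deriv ^^ 3) (logf f) 0 = 0 then 3 else 5 / 2)))"
proof -
  obtain \<delta> \<eta> b where "laplace_weight (\<lambda>x. logf f x - logf f 0) (- (deriv ^^ 2) (logf f) 0) \<delta> \<eta> b"
    using logf_laplace_weight[OF pos C4 unimodal H regvar curv] by blast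
  moreover have "\<bar>(deriv ^^ 4) (logf f) x\<bar> \<le> M" for x
    using M(2)[of x] by simp
  ultimately obtain \<beta>0 K where "K \<ge> 0" and R:
    "\<And>\<beta>. \<beta>0 \<le> \<beta> \<Longrightarrow> \<bar>Rfun f \<beta>\<bar> \<le> \<bar>(deriv ^^ 3) (logf f) 0\<bar> / 2 * K / sqrt \<beta> ^ 3 + K / sqrt \<beta> ^ 4"
    using Rfun_bound[OF pos C4 unimodal] by blast
  show ?thesis
  proof (cases "(deriv ^^ 3) (logf f) 0 = 0")
    case True
    then have "\<bar>Rfun f \<beta>\<bar> \<le> K / sqrt \<beta> ^ 4" if "\<beta>0 \<le> \<beta>" for \<beta>
      using R[OF that] by simp
    from bigo_of_sqrt_power_bound[of \<beta>0 "Rfun f", OF this] True show ?thesis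
      by simp
  next
    case False
    have "\<bar>Rfun f \<beta>\<bar> \<le> (\<bar>(deriv ^^ 3) (logf f) 0\<bar> / 2 * K + K) / sqrt \<beta> ^ 3" if "max \<beta>0 1 \<le> \<beta>" for \<beta>
    proof -
      have "K / sqrt \<beta> ^ 4 \<le> K / sqrt \<beta> ^ 3"
        using that \<open>K \<ge> 0\<close> by (intro divide_left_mono power_increasing) auto
      then show ?thesis
        using R[of \<beta>] that by (simp add: add_divide_distrib)
    qed
    from bigo_of_sqrt_power_bound[of "max \<beta>0 1" "Rfun f", OF this] False show ?thesis
      by simp
  qed
qed

end
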